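(* Let $n\ge1$, $k\ge1$, $A\in\{1,\dots,n\}^k$ and $B\subset\{1,\dots,n\}$ with $|B|=k+1$. Let $\tilde A=c^{1-\rho(A,B)}A$, $\tilde B=c^{1-\rho(A,B)}B$, let $I=(i_1\le\dots\le i_k)$ be the non-decreasing rearrangement of $\tilde A$, and $(j_1,\dots,j_k)=\Pi(I,\tilde B)$. Then $i_l<j_l$ for all $l\in\{1,\dots,k\}$.
   Context: Let $c=(1\,2\,\dots\,n)$ be the cyclic shift $x\mapsto x+1$ for $x<n$, $n\mapsto1$; it acts on sequences componentwise and on sets elementwise, and powers $c^m$ are taken with $m\in\mathbb Z$ (modulo $n$). Parking process: given $E=(e_1,\dots,e_k)\in\{1,\dots,n\}^k$ and $O\subset\{1,\dots,n\}$ with $|O|=k+1$, define $(p_1,\dots,p_k)$ by backward induction: $p_k=c^{r}(e_k)$ where $r=\min\{s\in\{1,\dots,n\}: c^s(e_k)\in O\}$, and, once $p_k,\dots,p_{l+1}$ are defined, $p_l=c^{r}(e_l)$ where $r=\min\{s\in\{1,\dots,n\}: c^s(e_l)\in O\setminus\{p_{l+1},\dots,p_k\}\}$. Write $\Pi(E,O)=(p_1,\dots,p_k)$; the unique element of $O\setminus\{p_1,\dots,p_k\}$ is the residue $\rho(E,O)$. *)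

theory Defs
  imports Main
begin

definition cyc :: "nat \<Rightarrow> nat \<Rightarrow> nat" where
  "cyc n x = (if x < n then x + 1 else 1)"

definition cycpow :: "nat \<Rightarrow> int \<Rightarrow> nat \<Rightarrow> nat" where
  "cycpow n m = cyc n ^^ nat (m mod int n)"

text \<open>Parking process: the list (e_1,...,e_k) is processed from the back;
  park n Oc (e # es) parks e after the cars es have already been parked.\<close>
fun park :: "nat \<Rightarrow> nat set \<Rightarrow> nat list \<Rightarrow> nat list" where
  "park n Oc [] = []"
| "park n Oc (e # es) =
     (let ps = park n Oc es;
          r = (LEAST s::nat. s \<in> {1..n} \<and> (cyc n ^^ s) e \<in> Oc - set ps)
      in (cyc n ^^ r) e # ps)"

definition residue :: "nat \<Rightarrow> nat list \<Rightarrow> nat set \<Rightarrow> nat" where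
  "residue n E Oc = (THE x. x \<in> Oc - set (park n Oc E))"

end

theory Submission
  imports Defs
begin

text \<open>
  Let r be the residue of parking A into B, i.e. the spot of B
  that stays free.  Rotating everything by c^(1-r) moves r to the spot 1, and
  parking commutes with rotations, so 1 is a spot of B~ that stays free when
  A~ is parked into B~.  The set of occupied spots does not depend on the order
  in which the cars arrive, so 1 also stays free when the sorted list I is
  parked into B~.  Finally, a car can only park at a spot j \<le> its preferred
  spot i by wrapping around past n and hence past the free spot 1; so i_l < j_l.
\<close>

lemma cyc_pow_int:
  assumes "x \<in> {1..n}"
  shows "int ((cyc n ^^ s) x) = (int x - 1 + int s) mod int n + 1"
proof (induction s)
  case 0
  then show ?case using assms by simp
next
  case (Suc s)
  have n: "n \<ge> 1" using assms by simp
  let ?m = "(int x - 1 + int s) mod int n"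
  have r: "0 \<le> ?m" "?m < int n" using n by auto
  have "int ((cyc n ^^ Suc s) x) = int (cyc n ((cyc n ^^ s) x))" by simp
  also have "\<dots> = (if ?m + 1 < int n then ?m + 2 else 1)"
  proof -
    define y where "y = (cyc n ^^ s) x"
    have y: "int y = ?m + 1" using Suc y_def by simp
    have "(y < n) = (?m + 1 < int n)" using y by linarith
    then show ?thesis using y unfolding y_def[symmetric] cyc_def by auto
  qed
  also have "\<dots> = (int x - 1 + int (Suc s)) mod int n + 1"
  proof -
    have e: "(int x - 1 + int (Suc s)) mod int n = (?m + 1) mod int n"
      by (simp add: mod_simps add.assoc)
    show ?thesis
    proof (cases "?m + 1 < int n")
      case True
      then show ?thesis unfolding e using r by simp
    next
      case False
      then have "?m + 1 = int n" using r by simp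
      then show ?thesis unfolding e using False by simp
    qed
  qed
  finally show ?case .
qed

lemma cyc_pow_range:
  assumes "x \<in> {1..n}" shows "(cyc n ^^ s) x \<in> {1..n}"
proof -
  have n: "n \<ge> 1" using assms by simp
  have "int ((cyc n ^^ s) x) \<ge> 1" "int ((cyc n ^^ s) x) \<le> int n"
    using cyc_pow_int[OF assms, of s] n
    by (simp_all add: add1_zle_eq pos_mod_bound)
  then show ?thesis by auto
qed

text \<open>The cyclic distance from e to z: the number of steps s \<in> {1..n} with
  c^s e = z.  A parked car ends at the free spot of minimal cyclic distance.\<close>
definition cdist :: "nat \<Rightarrow> nat \<Rightarrow> nat \<Rightarrow> int" where
  "cdist n e z = (int z - int e - 1) mod int n + 1"

lemma mod_diff_diff_mod: "(b mod n - a mod n - c) mod n = (b - a - c) mod (n::int)"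
proof -
  have "(b mod n - a mod n - c) mod n = (b mod n - (a mod n + c)) mod n" by (simp add: algebra_simps)
  also have "\<dots> = (b - (a mod n + c)) mod n" by (rule mod_diff_left_eq)
  also have "\<dots> = ((b - c) - a mod n) mod n" by (simp add: algebra_simps)
  also have "\<dots> = ((b - c) - a) mod n" by (rule mod_diff_right_eq)
  finally show ?thesis by (simp add: algebra_simps)
qed

lemma cdist_range: "n \<ge> 1 \<Longrightarrow> 1 \<le> cdist n e z \<and> cdist n e z \<le> int n"
  unfolding cdist_def by (simp add: add1_zle_eq)

lemma pow_cdist:
  assumes "e \<in> {1..n}" "z \<in> {1..n}"
  shows "(cyc n ^^ nat (cdist n e z)) e = z"
proof -
  have n: "n \<ge> 1" using assms by simp
  have d: "cdist n e z \<ge> 1" using cdist_range[OF n] by simp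
  have "int ((cyc n ^^ nat (cdist n e z)) e) = (int e - 1 + cdist n e z) mod int n + 1"
    using cyc_pow_int[OF assms(1)] d by simp
  also have "(int e - 1 + cdist n e z) mod int n = (int z - 1) mod int n"
    unfolding cdist_def by (simp add: mod_simps algebra_simps)
  also have "\<dots> = int z - 1" using assms by simp
  finally show ?thesis by simp
qed

lemma cdist_pow:
  assumes "e \<in> {1..n}" "s \<in> {1..n}"
  shows "cdist n e ((cyc n ^^ s) e) = int s"
proof -
  have "cdist n e ((cyc n ^^ s) e) = ((int e - 1 + int s) mod int n - int e) mod int n + 1"
    unfolding cdist_def using cyc_pow_int[OF assms(1)] by simp
  also have "((int e - 1 + int s) mod int n - int e) mod int n = (int s - 1) mod int n"
    by (simp add: mod_simps algebra_simps)
  also have "\<dots> = int s - 1" using assms by simp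
  finally show ?thesis by simp
qed

lemma cdist_inj:
  assumes "e \<in> {1..n}" "z \<in> {1..n}" "w \<in> {1..n}" "cdist n e z = cdist n e w"
  shows "z = w"
  using pow_cdist[OF assms(1,2)] pow_cdist[OF assms(1,3)] assms(4) by metis

lemma cdist_shift:
  assumes "cdist n e x < cdist n e z" "n \<ge> 1"
  shows "cdist n x z = cdist n e z - cdist n e x"
proof -
  define a where "a = (int x - int e - 1) mod int n"
  define b where "b = (int z - int e - 1) mod int n"
  have ab: "0 \<le> a" "a < b" "b < int n" using assms unfolding a_def b_def cdist_def by auto
  have "(int z - int x - 1) mod int n = (b - a - 1) mod int n"
    unfolding a_def b_def mod_diff_diff_mod by (simp add: algebra_simps)
  also have "\<dots> = b - a - 1" using ab by simp
  finally show ?thesis unfolding cdist_def a_def b_def by simp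
qed

lemma cdist_rotate:
  assumes "e \<in> {1..n}" "z \<in> {1..n}"
  shows "cdist n ((cyc n ^^ m) e) ((cyc n ^^ m) z) = cdist n e z"
proof -
  have "((int z - 1 + int m) mod int n + 1 - ((int e - 1 + int m) mod int n + 1) - 1) mod int n
      = ((int z - 1 + int m) mod int n - (int e - 1 + int m) mod int n - 1) mod int n"
    by (simp add: algebra_simps)
  also have "\<dots> = (int z - int e - 1) mod int n" unfolding mod_diff_diff_mod by (simp add: algebra_simps)
  finally show ?thesis unfolding cdist_def cyc_pow_int[OF assms(1)] cyc_pow_int[OF assms(2)] by simp
qed

lemma cdist_wrap:
  assumes "e \<in> {1..n}" "z \<in> {1..n}" "z \<le> e"
  shows "cdist n e z = int z - int e + int n"
proof -
  have "(int z - int e - 1 + int n) mod int n = int z - int e - 1 + int n"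
    using assms by (intro mod_pos_pos_trivial) auto
  then show ?thesis unfolding cdist_def by simp
qed

lemma cyc_pow_inj: "inj_on (cyc n ^^ m) {1..n}"
proof (rule inj_onI)
  fix e z assume e: "e \<in> {1..n}" and z: "z \<in> {1..n}" and eq: "(cyc n ^^ m) e = (cyc n ^^ m) z"
  have "cdist n e z = cdist n ((cyc n ^^ m) e) ((cyc n ^^ m) z)" using cdist_rotate[OF e z] by simp
  also have "\<dots> = cdist n ((cyc n ^^ m) e) ((cyc n ^^ m) e)" using eq by simp
  also have "\<dots> = cdist n e e" using cdist_rotate[OF e e] by simp
  finally show "e = z" using cdist_inj[OF e z e] by simp
qed

lemma cycpow_to_one:
  assumes "r \<in> {1..n}"
  shows "cycpow n (1 - int r) r = 1"
proof -
  have "int (cycpow n (1 - int r) r) = (int r - 1 + (1 - int r) mod int n) mod int n + 1"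
    unfolding cycpow_def using cyc_pow_int[OF assms] assms by simp
  also have "\<dots> = 1" by (simp add: mod_simps)
  finally show ?thesis by simp
qed

definition next_free :: "nat \<Rightarrow> nat set \<Rightarrow> nat set \<Rightarrow> nat \<Rightarrow> nat" where
  "next_free n Oc S e = (cyc n ^^ (LEAST s::nat. s \<in> {1..n} \<and> (cyc n ^^ s) e \<in> Oc - S)) e"

lemma park_Cons: "park n Oc (e # es) = next_free n Oc (set (park n Oc es)) e # park n Oc es"
  by (simp add: Let_def next_free_def)

declare park.simps(2)[simp del]

lemma next_free_props:
  assumes "Oc \<subseteq> {1..n}" "e \<in> {1..n}" "Oc - S \<noteq> {}"
  shows "next_free n Oc S e \<in> Oc - S \<and> (\<forall>w\<in>Oc - S. cdist n e (next_free n Oc S e) \<le> cdist n e w)"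
proof -
  have n: "n \<ge> 1" using assms(2) by simp
  let ?P = "\<lambda>s. s \<in> {1..n} \<and> (cyc n ^^ s) e \<in> Oc - S"
  obtain w where w: "w \<in> Oc - S" using assms(3) by blast
  have Pw: "\<And>w. w \<in> Oc - S \<Longrightarrow> ?P (nat (cdist n e w))"
  proof -
    fix w assume "w \<in> Oc - S"
    then show "?P (nat (cdist n e w))"
      using pow_cdist[OF assms(2), of w] assms(1) cdist_range[OF n, of e w] by auto
  qed
  define s0 where "s0 = (LEAST s. ?P s)"
  have P0: "?P s0" unfolding s0_def using Pw[OF w] by (rule LeastI)
  have le: "\<And>w. w \<in> Oc - S \<Longrightarrow> s0 \<le> nat (cdist n e w)"
    unfolding s0_def using Pw by (rule Least_le)
  have nfe: "next_free n Oc S e = (cyc n ^^ s0) e" unfolding next_free_def s0_def by simp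
  have d0: "cdist n e (next_free n Oc S e) = int s0" unfolding nfe using cdist_pow[OF assms(2)] P0 by simp
  show ?thesis
  proof
    show "next_free n Oc S e \<in> Oc - S" using P0 nfe by simp
    show "\<forall>w\<in>Oc - S. cdist n e (next_free n Oc S e) \<le> cdist n e w"
    proof
      fix w assume "w \<in> Oc - S"
      then have "s0 \<le> nat (cdist n e w)" by (rule le)
      then show "cdist n e (next_free n Oc S e) \<le> cdist n e w" using d0 cdist_range[OF n, of e w] by linarith
    qed
  qed
qed

lemma next_free_unique:
  assumes "Oc \<subseteq> {1..n}" "e \<in> {1..n}" "z \<in> Oc - S" "\<forall>w\<in>Oc - S. cdist n e z \<le> cdist n e w"
  shows "next_free n Oc S e = z"
proof -
  have ne: "Oc - S \<noteq> {}" using assms(3) by blast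
  note p = next_free_props[OF assms(1,2) ne]
  have "cdist n e (next_free n Oc S e) = cdist n e z" using p assms(3,4) by force
  then show ?thesis using cdist_inj[OF assms(2)] p assms(1,3) by blast
qed

text \<open>If the spot 1 is free, a car parks strictly after its preferred spot, unless
  it parks at 1: reaching a spot \<le> e would mean passing the free spot 1.\<close>
lemma next_free_no_wrap:
  assumes "Oc \<subseteq> {1..n}" "e \<in> {1..n}" "1 \<in> Oc - S" "next_free n Oc S e \<noteq> 1"
  shows "e < next_free n Oc S e"
proof (rule ccontr)
  let ?j = "next_free n Oc S e"
  have "Oc - S \<noteq> {}" using assms(3) by blast
  note props = next_free_props[OF assms(1,2) this]
  have j: "?j \<in> {1..n}" using props assms(1) by blast
  have closer: "cdist n e ?j \<le> cdist n e 1" using props assms(3) by blast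
  assume "\<not> e < ?j"
  then have "cdist n e ?j = int ?j - int e + int n" using cdist_wrap[OF assms(2) j] by simp
  moreover have "cdist n e 1 = 1 - int e + int n" using cdist_wrap[OF assms(2)] assms(2) by simp
  ultimately show False using closer j assms(4) by simp
qed

lemma park_length: "length (park n Oc xs) = length xs"
  by (induction xs) (auto simp: park_Cons)

lemma park_nth:
  "l < length xs \<Longrightarrow> park n Oc xs ! l = next_free n Oc (set (park n Oc (drop (Suc l) xs))) (xs ! l)"
proof (induction xs arbitrary: l)
  case Nil
  then show ?case by simp
next
  case (Cons x xs)
  then show ?case by (cases l) (auto simp: park_Cons)
qed

lemma park_drop_sub: "set (park n Oc (drop m xs)) \<subseteq> set (park n Oc xs)"
proof (induction xs arbitrary: m)
  case Nil
  then show ?case by simp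
next
  case (Cons x xs)
  then show ?case by (cases m) (auto simp: park_Cons)
qed

lemma park_no_wrap:
  assumes "Oc \<subseteq> {1..n}" "set es \<subseteq> {1..n}" "1 \<in> Oc" "1 \<notin> set (park n Oc es)"
    and "l < length es"
  shows "es ! l < park n Oc es ! l"
proof -
  define S where "S = set (park n Oc (drop (Suc l) es))"
  have park_l: "park n Oc es ! l = next_free n Oc S (es ! l)"
    unfolding S_def using park_nth assms(5) .
  have "S \<subseteq> set (park n Oc es)" unfolding S_def by (rule park_drop_sub)
  then have "1 \<in> Oc - S" using assms(3,4) by blast
  moreover have "park n Oc es ! l \<noteq> 1"
    using nth_mem[of l "park n Oc es"] park_length assms(4,5) by fastforce
  moreover have "es ! l \<in> {1..n}" using assms(2,5) nth_mem by blast
  ultimately show ?thesis unfolding park_l using next_free_no_wrap[OF assms(1)] by blast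
qed

lemma park_inv:
  assumes "Oc \<subseteq> {1..n}" "set es \<subseteq> {1..n}" "length es < card Oc"
  shows "set (park n Oc es) \<subseteq> Oc \<and> distinct (park n Oc es)"
  using assms(2,3)
proof (induction es)
  case Nil
  then show ?case by simp
next
  case (Cons e es)
  let ?ps = "park n Oc es"
  have IH: "set ?ps \<subseteq> Oc" "distinct ?ps" using Cons by auto
  have fin: "finite Oc" using assms(1) finite_subset by blast
  have "card (set ?ps) = length es" using IH(2) distinct_card park_length by metis
  then have "card (Oc - set ?ps) > 0" using IH(1) fin Cons.prems by (simp add: card_Diff_subset)
  then have "Oc - set ?ps \<noteq> {}" by force
  then have "next_free n Oc (set ?ps) e \<in> Oc - set ?ps"
    using next_free_props[OF assms(1)] Cons.prems by auto
  then show ?case using IH by (simp add: park_Cons)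
qed

lemma park_card:
  assumes "Oc \<subseteq> {1..n}" "set es \<subseteq> {1..n}" "length es < card Oc"
  shows "card (Oc - set (park n Oc es)) = card Oc - length es"
proof -
  note inv = park_inv[OF assms]
  have fin: "finite Oc" using assms(1) finite_subset by blast
  have "card (set (park n Oc es)) = length es" using inv distinct_card park_length by metis
  then show ?thesis using inv fin by (simp add: card_Diff_subset)
qed

lemma park_free:
  assumes "Oc \<subseteq> {1..n}" "set es \<subseteq> {1..n}" "length es < card Oc"
  shows "Oc - set (park n Oc es) \<noteq> {}"
proof
  assume "Oc - set (park n Oc es) = {}"
  then have "card (Oc - set (park n Oc es)) = 0" by (simp only: card.empty)
  then show False using park_card[OF assms] assms(3) by simp
qed

lemma residue_free:
  assumes "Oc \<subseteq> {1..n}" "set es \<subseteq> {1..n}" "card Oc = length es + 1"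
  shows "Oc - set (park n Oc es) = {residue n es Oc}"
proof -
  have "card (Oc - set (park n Oc es)) = 1" using park_card[OF assms(1,2)] assms(3) by simp
  then obtain r where r: "Oc - set (park n Oc es) = {r}" by (metis card_1_singletonE)
  then have "residue n es Oc = r" unfolding residue_def by simp
  then show ?thesis using r by simp
qed

text \<open>The next free spot commutes with rotations, since rotations preserve cyclic
  distances.\<close>
lemma next_free_rotate:
  assumes "Oc \<subseteq> {1..n}" "S \<subseteq> Oc" "e \<in> {1..n}" "Oc - S \<noteq> {}"
  shows "next_free n ((cyc n ^^ m) ` Oc) ((cyc n ^^ m) ` S) ((cyc n ^^ m) e)
       = (cyc n ^^ m) (next_free n Oc S e)"
proof (rule next_free_unique)
  let ?sh = "cyc n ^^ m"
  let ?x = "next_free n Oc S e"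
  note props = next_free_props[OF assms(1,3,4)]
  have inj: "inj_on ?sh Oc" using cyc_pow_inj assms(1) by (rule inj_on_subset)
  have free: "?sh ` Oc - ?sh ` S = ?sh ` (Oc - S)"
    using inj_on_image_set_diff[OF inj _ assms(2)] by simp
  have dist: "cdist n (?sh e) (?sh w) = cdist n e w" if "w \<in> Oc" for w
    using cdist_rotate[OF assms(3)] assms(1) that by blast
  show "?sh ` Oc \<subseteq> {1..n}" using assms(1) cyc_pow_range by blast
  show "?sh e \<in> {1..n}" using cyc_pow_range assms(3) .
  show "?sh ?x \<in> ?sh ` Oc - ?sh ` S" unfolding free using props by blast
  show "\<forall>w\<in>?sh ` Oc - ?sh ` S. cdist n (?sh e) (?sh ?x) \<le> cdist n (?sh e) w"
    unfolding free using props dist by auto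
qed

lemma park_rotate:
  assumes "Oc \<subseteq> {1..n}" "set es \<subseteq> {1..n}" "length es < card Oc"
  shows "park n ((cyc n ^^ m) ` Oc) (map (cyc n ^^ m) es) = map (cyc n ^^ m) (park n Oc es)"
  using assms(2,3)
proof (induction es)
  case Nil
  then show ?case by simp
next
  case (Cons e es)
  let ?ps = "park n Oc es"
  have IH: "park n ((cyc n ^^ m) ` Oc) (map (cyc n ^^ m) es) = map (cyc n ^^ m) ?ps"
    using Cons by simp
  have "set ?ps \<subseteq> Oc" using park_inv[OF assms(1)] Cons.prems by simp
  moreover have "Oc - set ?ps \<noteq> {}" using park_free[OF assms(1)] Cons.prems by simp
  moreover have "e \<in> {1..n}" using Cons.prems by simp
  ultimately show ?case using next_free_rotate[OF assms(1)] IH by (simp add: park_Cons)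
qed

text \<open>Order independence.  If a car preferring a parks at x, a later car preferring
  a behaves as if it preferred x: the spots between a and x are all taken.\<close>
lemma next_free_after:
  assumes "Oc \<subseteq> {1..n}" "a \<in> {1..n}" "x = next_free n Oc S a" "Oc - insert x S \<noteq> {}"
  shows "next_free n Oc (insert x S) a = next_free n Oc (insert x S) x"
proof -
  have n: "n \<ge> 1" using assms(2) by simp
  have ne: "Oc - S \<noteq> {}" using assms(4) by blast
  note px = next_free_props[OF assms(1,2) ne, folded assms(3)]
  have x1: "x \<in> {1..n}" using px assms(1) by blast
  define u where "u = next_free n Oc (insert x S) x"
  note pu = next_free_props[OF assms(1) x1 assms(4), folded u_def]
  have lt: "cdist n a x < cdist n a w" if w: "w \<in> Oc - insert x S" for w
  proof -
    have "cdist n a x \<le> cdist n a w" using px w by blast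
    moreover have "cdist n a x \<noteq> cdist n a w"
      using cdist_inj[OF assms(2) x1, of w] w assms(1) by blast
    ultimately show ?thesis by simp
  qed
  show ?thesis unfolding u_def[symmetric]
  proof (rule next_free_unique[OF assms(1,2)])
    show "u \<in> Oc - insert x S" using pu by blast
    show "\<forall>w\<in>Oc - insert x S. cdist n a u \<le> cdist n a w"
    proof
      fix w assume w: "w \<in> Oc - insert x S"
      have "cdist n x u \<le> cdist n x w" using pu w by blast
      moreover have "cdist n x u = cdist n a u - cdist n a x" using cdist_shift[OF lt n] pu by blast
      moreover have "cdist n x w = cdist n a w - cdist n a x" using cdist_shift[OF lt[OF w] n] .
      ultimately show "cdist n a u \<le> cdist n a w" by simp
    qed
  qed
qed

lemma Diff_singleton_nonempty:
  assumes "finite A" "card A \<ge> 2"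
  shows "A - {z} \<noteq> {}"
proof
  assume "A - {z} = {}"
  then have "card A \<le> card {z}" using card_mono[of "{z}" A] by blast
  then show False using assms(2) by simp
qed

lemma next_free_insert_other:
  assumes "Oc \<subseteq> {1..n}" "a \<in> {1..n}" "Oc - S \<noteq> {}" "y \<noteq> next_free n Oc S a"
  shows "next_free n Oc (insert y S) a = next_free n Oc S a"
proof (rule next_free_unique[OF assms(1,2)])
  note props = next_free_props[OF assms(1-3)]
  show "next_free n Oc S a \<in> Oc - insert y S" using props assms(4) by simp
  show "\<forall>w\<in>Oc - insert y S. cdist n a (next_free n Oc S a) \<le> cdist n a w" using props by simp
qed

definition occupy :: "nat \<Rightarrow> nat set \<Rightarrow> nat \<Rightarrow> nat set \<Rightarrow> nat set" where
  "occupy n Oc e S = insert (next_free n Oc S e) S"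

lemma occupy_commute:
  assumes "Oc \<subseteq> {1..n}" "card (Oc - S) \<ge> 2" "a \<in> {1..n}" "b \<in> {1..n}"
  shows "occupy n Oc a (occupy n Oc b S) = occupy n Oc b (occupy n Oc a S)"
proof -
  have fin: "finite (Oc - S)" using assms(1) by (meson finite_Diff finite_atLeastAtMost finite_subset)
  have two_free: "Oc - insert z S \<noteq> {}" for z
  proof -
    have "Oc - insert z S = (Oc - S) - {z}" by blast
    then show ?thesis using Diff_singleton_nonempty[OF fin assms(2), of z] by (simp only: not_False_eq_True)
  qed
  have one_free: "Oc - S \<noteq> {}" using two_free[of 0] by blast
  show ?thesis
  proof (cases "next_free n Oc S a = next_free n Oc S b")
    case False
    then have "next_free n Oc (insert (next_free n Oc S b) S) a = next_free n Oc S a"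
      and "next_free n Oc (insert (next_free n Oc S a) S) b = next_free n Oc S b"
      using next_free_insert_other[OF assms(1,3) one_free] next_free_insert_other[OF assms(1,4) one_free]
      by metis+
    then show ?thesis unfolding occupy_def by (simp add: insert_commute)
  next
    case True
    let ?x = "next_free n Oc S a"
    have "next_free n Oc (insert ?x S) a = next_free n Oc (insert ?x S) ?x"
      using next_free_after[OF assms(1,3) refl two_free] .
    moreover have "next_free n Oc (insert ?x S) b = next_free n Oc (insert ?x S) ?x"
      using next_free_after[OF assms(1,4) True two_free] .
    ultimately show ?thesis unfolding occupy_def True by simp
  qed
qed

lemma set_park_Cons: "set (park n Oc (e # es)) = occupy n Oc e (set (park n Oc es))"
  by (simp add: park_Cons occupy_def)

lemma park_insort:
  assumes "Oc \<subseteq> {1..n}" "set ys \<subseteq> {1..n}" "x \<in> {1..n}" "length ys + 1 < card Oc"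
  shows "set (park n Oc (insort x ys)) = occupy n Oc x (set (park n Oc ys))"
  using assms(2,4)
proof (induction ys)
  case Nil
  then show ?case by (simp add: set_park_Cons)
next
  case (Cons y ys)
  show ?case
  proof (cases "x \<le> y")
    case True
    then show ?thesis by (simp add: set_park_Cons)
  next
    case False
    let ?S = "set (park n Oc ys)"
    have c: "card (Oc - ?S) \<ge> 2" using park_card[OF assms(1), of ys] Cons.prems by simp
    have "set (park n Oc (insort x (y # ys))) = occupy n Oc y (set (park n Oc (insort x ys)))"
      using False by (simp add: set_park_Cons)
    also have "\<dots> = occupy n Oc y (occupy n Oc x ?S)" using Cons by simp
    also have "\<dots> = occupy n Oc x (occupy n Oc y ?S)"
      using occupy_commute[OF assms(1) c] Cons.prems assms(3) by simp
    finally show ?thesis by (simp add: set_park_Cons)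
  qed
qed

lemma park_sort:
  assumes "Oc \<subseteq> {1..n}" "set xs \<subseteq> {1..n}" "length xs < card Oc"
  shows "set (park n Oc (sort xs)) = set (park n Oc xs)"
  using assms(2,3)
proof (induction xs)
  case Nil
  then show ?case by simp
next
  case (Cons x xs)
  have "set (park n Oc (sort (x # xs))) = set (park n Oc (insort x (sort xs)))" by simp
  also have "\<dots> = occupy n Oc x (set (park n Oc (sort xs)))"
    using park_insort[OF assms(1), of "sort xs" x] Cons.prems by simp
  also have "\<dots> = occupy n Oc x (set (park n Oc xs))" using Cons by simp
  finally show ?case by (simp add: set_park_Cons)
qed

lemma rotated_sorted_parking_avoids_one:
  assumes "Oc \<subseteq> {1..n}" "set es \<subseteq> {1..n}" "card Oc = length es + 1"
    and sh: "sh = cycpow n (1 - int (residue n es Oc))"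
  shows "1 \<in> sh ` Oc" "1 \<notin> set (park n (sh ` Oc) (sort (map sh es)))"
proof -
  define r where "r = residue n es Oc"
  have "Oc - set (park n Oc es) = {r}" unfolding r_def using residue_free[OF assms(1-3)] .
  then have r: "r \<in> Oc - set (park n Oc es)" by simp
  have sh_r: "sh r = 1" using cycpow_to_one[of r n] r assms(1) unfolding sh r_def by blast
  have sh_pow: "sh = cyc n ^^ nat ((1 - int r) mod int n)" unfolding sh r_def cycpow_def ..
  have inj: "inj_on sh Oc" unfolding sh_pow using cyc_pow_inj assms(1) by (rule inj_on_subset)
  have rotated: "sh ` Oc \<subseteq> {1..n}" "set (map sh es) \<subseteq> {1..n}"
    unfolding sh_pow using cyc_pow_range assms(1,2) by auto
  have card: "length (map sh es) < card (sh ` Oc)" using card_image[OF inj] assms(3) by simp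
  show "1 \<in> sh ` Oc" using r sh_r by force
  have "set (park n (sh ` Oc) (sort (map sh es))) = set (park n (sh ` Oc) (map sh es))"
    using park_sort[OF rotated card] .
  also have "\<dots> = sh ` set (park n Oc es)"
    unfolding sh_pow using park_rotate[OF assms(1,2)] assms(3) by simp
  also have "\<dots> \<subseteq> sh ` (Oc - {r})" using park_inv[OF assms(1,2)] assms(3) r by auto
  also have "\<dots> = sh ` Oc - {1}" using inj_on_image_set_diff[OF inj, of Oc "{r}"] r sh_r by simp
  finally show "1 \<notin> set (park n (sh ` Oc) (sort (map sh es)))" by blast
qed

theorem lemma5p2:
  fixes n k :: nat and A :: "nat list" and B :: "nat set"
  assumes "n \<ge> 1" and "k \<ge> 1"
    and "length A = k" and "set A \<subseteq> {1..n}"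
    and "B \<subseteq> {1..n}" and "card B = k + 1"
  shows "let sh = cycpow n (1 - int (residue n A B));
             At = map sh A; Bt = sh ` B;
             I = sort At; J = park n Bt I
         in \<forall>l < k. I ! l < J ! l"
proof -
  define sh where "sh = cycpow n (1 - int (residue n A B))"
  have card: "card B = length A + 1" using assms(3,6) by simp
  note one = rotated_sorted_parking_avoids_one[OF assms(5,4) card sh_def]
  have rotated: "sh ` B \<subseteq> {1..n}" "set (sort (map sh A)) \<subseteq> {1..n}"
    unfolding sh_def cycpow_def using cyc_pow_range assms(4,5) by auto
  have "sort (map sh A) ! l < park n (sh ` B) (sort (map sh A)) ! l" if "l < k" for l
    using park_no_wrap[OF rotated one] that assms(3) by simp
  then show ?thesis unfolding Let_def sh_def by blast
qed

end
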